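(* Let $N\ge 2$ and for $0\le k\le\lfloor N/2\rfloor$ let $\mathcal I_k$ be the set of $k$-element subsets $I\subset\mathbb{Z}_N$ such that $i\not\equiv i'+1\pmod N$ for all $i,i'\in I$ (so $|\mathcal I_0|=1$). Then for every $j$ with $1\le j\le\lfloor N/2\rfloor$, $$\sum_{k=0}^{j}(-1)^k\,|\mathcal I_k|\binom{N-2k}{j-k}=0 .$$ *)

theory Defs
  imports Main
begin

definition cyc_indep_sets :: "nat \<Rightarrow> nat \<Rightarrow> nat set set" where
  "cyc_indep_sets N k = {I. I \<subseteq> {0..<N} \<and> card I = k \<and>
      (\<forall>i\<in>I. \<forall>i'\<in>I. i \<noteq> (i' + 1) mod N)}"

end

theory Submission
  imports Defs "HOL-Library.Disjoint_Sets"
begin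

text \<open>Read the sum as a signed count of pairs (I, T), where I \<in> I_k occupies the positions
  i and i + 1 for each i \<in> I, T is a (j - k)-subset of the N - 2k unoccupied positions, and
  the sign is (-1)^|I|. Toggling the least position v that lies in I, or lies in T with v + 1
  neither in T nor in I, moves v between I and T; this is a sign-reversing involution on all
  pairs with |I| + |T| = j. Such a v exists as soon as 0 < j < N, because a nonempty
  proper subset of Z_N is not closed under i \<mapsto> i + 1.\<close>

definition cyc_succ :: "nat \<Rightarrow> nat \<Rightarrow> nat" where
  "cyc_succ N i = (i + 1) mod N"

lemma cyc_succ_less: "0 < N \<Longrightarrow> cyc_succ N i < N"
  unfolding cyc_succ_def by simp

lemma cyc_succ_image_subset:
  assumes "I \<subseteq> {0..<N}"
  shows "cyc_succ N ` I \<subseteq> {0..<N}"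
proof
  fix u assume "u \<in> cyc_succ N ` I"
  then obtain i where "i \<in> I" and "u = cyc_succ N i" by blast
  then show "u \<in> {0..<N}" using assms cyc_succ_less[of N i] by auto
qed

lemma inj_on_cyc_succ: "inj_on (cyc_succ N) {0..<N}"
  unfolding inj_on_def cyc_succ_def using mod_Suc by auto

lemma cyc_succ_neq:
  assumes "2 \<le> N"
  shows "cyc_succ N i \<noteq> i"
proof -
  consider "i + 1 < N" | "i + 1 = N" | "N \<le> i" by linarith
  then show ?thesis
  proof cases
    case 3
    have "(i + 1) mod N < N" using assms by simp
    then show ?thesis unfolding cyc_succ_def using 3 by linarith
  qed (use assms in \<open>auto simp: cyc_succ_def\<close>)
qed

lemma cyc_succ_closed_eq_all:
  assumes "v \<in> T" and "T \<subseteq> {0..<N}" and closed: "\<And>u. u \<in> T \<Longrightarrow> cyc_succ N u \<in> T"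
  shows "T = {0..<N}"
proof -
  have orbit: "(v + m) mod N \<in> T" for m
  proof (induction m)
    case 0
    then show ?case using assms(1,2) by auto
  next
    case (Suc m)
    have "(v + Suc m) mod N = cyc_succ N ((v + m) mod N)"
      unfolding cyc_succ_def by (simp add: mod_simps)
    then show ?case using Suc closed by auto
  qed
  have "u \<in> T" if "u < N" for u
  proof -
    have "v < N" using assms(1,2) by auto
    then have "(v + (N - v + u)) mod N = u" using that by simp
    then show ?thesis using orbit[of "N - v + u"] by simp
  qed
  then show ?thesis using assms(2) by auto
qed

definition admissible :: "nat \<Rightarrow> nat set \<Rightarrow> nat set \<Rightarrow> bool" where
  "admissible N I T \<longleftrightarrow> I \<subseteq> {0..<N} \<and> (\<forall>i\<in>I. \<forall>i'\<in>I. i \<noteq> cyc_succ N i') \<and>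
     T \<subseteq> {0..<N} \<and> T \<inter> (I \<union> cyc_succ N ` I) = {}"

definition configs :: "nat \<Rightarrow> nat \<Rightarrow> (nat set \<times> nat set) set" where
  "configs N j = {(I, T). admissible N I T \<and> card I + card T = j}"

lemma finite_configs: "finite (configs N j)"
proof (rule finite_subset)
  show "configs N j \<subseteq> Pow {0..<N} \<times> Pow {0..<N}"
    unfolding configs_def admissible_def by auto
qed simp

lemma card_configs_with_card_fst:
  assumes "k \<le> j"
  shows "card {x \<in> configs N j. card (fst x) = k}
           = card (cyc_indep_sets N k) * ((N - 2 * k) choose (j - k))"
proof -
  let ?free = "\<lambda>I. {0..<N} - (I \<union> cyc_succ N ` I)"
  let ?B = "\<lambda>I. {T. T \<subseteq> ?free I \<and> card T = j - k}"
  have Sigma_eq: "{x \<in> configs N j. card (fst x) = k} = Sigma (cyc_indep_sets N k) ?B"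
    using assms unfolding configs_def admissible_def cyc_indep_sets_def cyc_succ_def by auto
  have card_B: "card (?B I) = (N - 2 * k) choose (j - k)" if "I \<in> cyc_indep_sets N k" for I
  proof -
    have I: "I \<subseteq> {0..<N}" "card I = k" "\<forall>i\<in>I. \<forall>i'\<in>I. i \<noteq> cyc_succ N i'"
      using that unfolding cyc_indep_sets_def cyc_succ_def by auto
    have fin: "finite I" using I(1) finite_subset by blast
    have "card (cyc_succ N ` I) = k"
      using I(1,2) card_image inj_on_subset[OF inj_on_cyc_succ] by metis
    moreover have "I \<inter> cyc_succ N ` I = {}" using I(3) by auto
    ultimately have "card (I \<union> cyc_succ N ` I) = 2 * k"
      using card_Un_disjoint[OF fin finite_imageI[OF fin]] I(2) by simp
    moreover have sub: "I \<union> cyc_succ N ` I \<subseteq> {0..<N}"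
      using I(1) cyc_succ_image_subset by blast
    ultimately have "card (?free I) = N - 2 * k"
      using card_Diff_subset[OF finite_subset[OF sub] sub] by simp
    then show ?thesis using n_subsets[of "?free I" "j - k"] by simp
  qed
  have "finite (cyc_indep_sets N k)"
    by (rule finite_subset[of _ "Pow {0..<N}"]) (auto simp: cyc_indep_sets_def)
  then have "card (Sigma (cyc_indep_sets N k) ?B) = (\<Sum>I\<in>cyc_indep_sets N k. card (?B I))"
    by (intro card_SigmaI) auto
  also have "\<dots> = card (cyc_indep_sets N k) * ((N - 2 * k) choose (j - k))"
    using card_B by simp
  finally show ?thesis unfolding Sigma_eq .
qed

fun flippable :: "nat \<Rightarrow> nat set \<times> nat set \<Rightarrow> nat \<Rightarrow> bool" where
  "flippable N (I, T) v \<longleftrightarrow> v \<in> I \<or> (v \<in> T \<and> cyc_succ N v \<notin> T \<union> I)"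

fun flip_at :: "nat \<Rightarrow> nat set \<times> nat set \<Rightarrow> nat set \<times> nat set" where
  "flip_at v (I, T) = (if v \<in> I then (I - {v}, insert v T) else (insert v I, T - {v}))"

definition flip :: "nat \<Rightarrow> nat set \<times> nat set \<Rightarrow> nat set \<times> nat set" where
  "flip N x = flip_at (LEAST v. flippable N x v) x"

lemma flippable_exists:
  assumes "admissible N I T" and "0 < card I + card T" and "card I + card T < N"
  shows "\<exists>v. flippable N (I, T) v"
proof (cases "I = {}")
  case True
  with assms(2) obtain v where "v \<in> T" by fastforce
  have T: "T \<subseteq> {0..<N}" using assms(1) unfolding admissible_def by blast
  have "T \<noteq> {0..<N}" using True assms(3) by auto
  then have "\<exists>u\<in>T. cyc_succ N u \<notin> T"
    using cyc_succ_closed_eq_all[OF \<open>v \<in> T\<close> T] by blast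
  then show ?thesis using True by auto
qed auto

lemma configs_flip_at:
  assumes "2 \<le> N" and "(I, T) \<in> configs N j" and "flippable N (I, T) v"
  shows "flip_at v (I, T) \<in> configs N j"
proof -
  have adm: "admissible N I T" and j: "card I + card T = j"
    using assms(2) unfolding configs_def by auto
  then have fin: "finite I" "finite T"
    unfolding admissible_def by (auto intro: finite_subset)
  show ?thesis
  proof (cases "v \<in> I")
    case True
    then have "v \<notin> T" using adm unfolding admissible_def by auto
    moreover have "admissible N (I - {v}) (insert v T)"
      using adm True unfolding admissible_def by auto
    moreover have "0 < card I" using True fin(1) card_gt_0_iff by blast
    ultimately show ?thesis
      using True j fin by (simp add: configs_def card_Diff_singleton)
  next
    case False
    with assms(3) have v: "v \<in> T" "cyc_succ N v \<notin> T" "cyc_succ N v \<notin> I" by auto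
    have "admissible N (insert v I) (T - {v})"
      using adm False v cyc_succ_neq[OF assms(1), of v] unfolding admissible_def by auto
    moreover have "0 < card T" using v(1) fin(2) card_gt_0_iff by blast
    ultimately show ?thesis
      using False v j fin by (simp add: configs_def card_Diff_singleton)
  qed
qed

lemma sign_flip_at:
  assumes "finite I"
  shows "(-1::int) ^ card (fst (flip_at v (I, T))) = - ((-1) ^ card I)"
proof (cases "v \<in> I")
  case True
  then obtain m where "card I = Suc m" using assms by (metis card_Suc_Diff1)
  then show ?thesis using True by simp
next
  case False
  then show ?thesis using assms by simp
qed

lemma flip_at_flip_at:
  assumes "admissible N I T" and "flippable N (I, T) v"
  shows "flip_at v (flip_at v (I, T)) = (I, T)"
  using assms unfolding admissible_def by (auto simp: insert_absorb)

text \<open>Every point flippable after flipping at v is v itself or was flippable before, so v stays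
  the least one.\<close>
lemma Least_flippable_flip_at:
  assumes "2 \<le> N" and "admissible N I T" and "flippable N (I, T) v"
    and least: "\<And>u. flippable N (I, T) u \<Longrightarrow> v \<le> u"
  shows "(LEAST u. flippable N (flip_at v (I, T)) u) = v"
proof (rule Least_equality)
  show "flippable N (flip_at v (I, T)) v"
    using assms(2,3) cyc_succ_neq[OF assms(1), of v] unfolding admissible_def by auto
next
  fix u assume "flippable N (flip_at v (I, T)) u"
  then have "u = v \<or> flippable N (I, T) u" by (auto split: if_splits)
  then show "v \<le> u" using least by auto
qed

lemma flip_configs:
  assumes "2 \<le> N" and "0 < j" and "j < N" and x: "x \<in> configs N j"
  shows "flip N x \<in> configs N j" and "flip N (flip N x) = x"
    and "(-1::int) ^ card (fst (flip N x)) = - ((-1) ^ card (fst x))"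
proof -
  obtain I T where x_eq: "x = (I, T)" by fastforce
  have adm: "admissible N I T" and j: "card I + card T = j"
    using x unfolding x_eq configs_def by auto
  define v where "v = (LEAST u. flippable N (I, T) u)"
  have v: "flippable N (I, T) v"
    using flippable_exists[OF adm] assms(2,3) j unfolding v_def by (metis LeastI)
  have flip_IT: "flip N (I, T) = flip_at v (I, T)"
    unfolding flip_def v_def ..
  have "\<And>u. flippable N (I, T) u \<Longrightarrow> v \<le> u"
    unfolding v_def by (rule Least_le)
  then have "(LEAST u. flippable N (flip_at v (I, T)) u) = v"
    using Least_flippable_flip_at[OF assms(1) adm v] by blast
  then have "flip N (flip_at v (I, T)) = flip_at v (flip_at v (I, T))"
    by (simp add: flip_def)
  then show "flip N (flip N x) = x"
    unfolding x_eq flip_IT using flip_at_flip_at[OF adm v] by simp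
  show "flip N x \<in> configs N j"
    unfolding x_eq flip_IT using configs_flip_at[OF assms(1) x[unfolded x_eq] v] .
  have "finite I" using adm unfolding admissible_def by (auto intro: finite_subset)
  then show "(-1::int) ^ card (fst (flip N x)) = - ((-1) ^ card (fst x))"
    unfolding x_eq flip_IT fst_conv by (rule sign_flip_at)
qed

lemma sum_sign_configs_eq_0:
  assumes "2 \<le> N" and "0 < j" and "j < N"
  shows "(\<Sum>x\<in>configs N j. (-1::int) ^ card (fst x)) = 0"
proof (rule sum_involution_eq_0[where h = "flip N"])
  fix x assume x: "x \<in> configs N j"
  note flip = flip_configs[OF assms x]
  show "(-1::int) ^ card (fst (flip N x)) + (-1) ^ card (fst x) = 0" using flip(3) by simp
  show "flip N x \<in> configs N j" and "flip N (flip N x) = x" using flip(1,2) .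
  show "flip N x \<noteq> x"
  proof
    assume "flip N x = x"
    with flip(3) have "(-1::int) ^ card (fst x) = 0" by simp
    then show False by simp
  qed
qed

theorem mainTheorem2:
  fixes N j :: nat
  assumes "N \<ge> 2" and "1 \<le> j" and "j \<le> N div 2"
  shows "(\<Sum>k=0..j. (-1::int) ^ k * int (card (cyc_indep_sets N k))
            * int ((N - 2 * k) choose (j - k))) = 0"
proof -
  let ?sign = "\<lambda>x. (-1::int) ^ card (fst x)"
  have "(\<Sum>k=0..j. (-1::int) ^ k * int (card (cyc_indep_sets N k))
            * int ((N - 2 * k) choose (j - k)))
      = (\<Sum>k=0..j. (-1) ^ k * int (card {x \<in> configs N j. card (fst x) = k}))"
    by (intro sum.cong) (auto simp: card_configs_with_card_fst)
  also have "\<dots> = (\<Sum>k=0..j. \<Sum>x\<in>{x \<in> configs N j. card (fst x) = k}. ?sign x)"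
    by (intro sum.cong) auto
  also have "\<dots> = (\<Sum>x\<in>configs N j. ?sign x)"
    by (rule sum.group[OF finite_configs]) (auto simp: configs_def)
  also have "\<dots> = 0"
    using sum_sign_configs_eq_0 assms by simp
  finally show ?thesis .
qed

end
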